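(* Fix integers $s\geqslant 3$ and $n\geqslant 1$ and let $h_{n,s}=(1,n,n,\dots,n)$ with $s$ entries equal to $n$. Then \[ \alpha_{h_{n,s}}=\sum_{k=0}^{n}\binom{n}{k}k^{\,n-k} \] (with $0^0=1$); in particular it does not depend on $s$. Consequently, setting $\alpha_{h_{0,s}}=1$, \[ \mathrm{Bor}\Big(\sum_{n\geqslant 0}\alpha_{h_{n,s}}t^n\Big)=e^{te^t}. \]
   Context: Let $\mathbb N=\mathbb Z_{\geqslant 0}$ with the componentwise order. A partition in $\mathbb N^n$ is a finite subset $\lambda\subset\mathbb N^n$ closed downward. The degree of a point is the sum of its coordinates; $\lambda_{=i}$, $\lambda_{\geqslant i}$ are the elements of degree $i$, resp. $\geqslant i$; the Hilbert–Samuel function $h_\lambda(i)=|\lambda_{=i}|$ is written as the tuple $(h_\lambda(0),h_\lambda(1),\dots,h_\lambda(\ell))$, $\ell$ the maximal degree. $\mathrm{Soc}(\lambda)$ is the set of maximal elements. For a tuple $h=(1,h_1,\dots,h_\ell)$, $\alpha_h$ is the number of partitions $\lambda\subset\mathbb N^{h_1}$ with $h_\lambda=h$ and $\mathrm{Soc}(\lambda)\subset\lambda_{\geqslant 3}$. $\mathrm{Bor}\colon\mathbb Q[[t]]\to\mathbb Q[[t]]$ sends $\sum f_kt^k\mapsto\sum\frac{f_k}{k!}t^k$. *)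

theory Defs
  imports "HOL-Computational_Algebra.Formal_Power_Series"
begin

text \<open>Points of N^n are modelled as functions nat => nat vanishing at all indices >= n;
  the componentwise order is the pointwise order on functions.\<close>

definition in_Nn :: "nat \<Rightarrow> (nat \<Rightarrow> nat) \<Rightarrow> bool" where
  "in_Nn n x \<longleftrightarrow> (\<forall>i\<ge>n. x i = 0)"

definition deg :: "nat \<Rightarrow> (nat \<Rightarrow> nat) \<Rightarrow> nat" where
  "deg n x = (\<Sum>i<n. x i)"

definition is_partition :: "nat \<Rightarrow> (nat \<Rightarrow> nat) set \<Rightarrow> bool" where
  "is_partition n L \<longleftrightarrow> finite L \<and> (\<forall>x\<in>L. in_Nn n x) \<and>
     (\<forall>x\<in>L. \<forall>y. in_Nn n y \<and> y \<le> x \<longrightarrow> y \<in> L)"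

definition hilb :: "nat \<Rightarrow> (nat \<Rightarrow> nat) set \<Rightarrow> nat \<Rightarrow> nat" where
  "hilb n L i = card {x\<in>L. deg n x = i}"

definition hilb_tuple :: "nat \<Rightarrow> (nat \<Rightarrow> nat) set \<Rightarrow> nat list" where
  "hilb_tuple n L = (if L = {} then [] else map (hilb n L) [0..<Suc (Max (deg n ` L))])"

definition Soc :: "(nat \<Rightarrow> nat) set \<Rightarrow> (nat \<Rightarrow> nat) set" where
  "Soc L = {x\<in>L. \<forall>y\<in>L. x \<le> y \<longrightarrow> y = x}"

definition geq_part :: "nat \<Rightarrow> (nat \<Rightarrow> nat) set \<Rightarrow> nat \<Rightarrow> (nat \<Rightarrow> nat) set" where
  "geq_part n L i = {x\<in>L. deg n x \<ge> i}"

definition alpha :: "nat list \<Rightarrow> nat" where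
  "alpha h = card {L. is_partition (h ! 1) L \<and> hilb_tuple (h ! 1) L = h \<and>
                       Soc L \<subseteq> geq_part (h ! 1) L 3}"

definition hns :: "nat \<Rightarrow> nat \<Rightarrow> nat list" where
  "hns n s = 1 # replicate s n"

definition Bor :: "real fps \<Rightarrow> real fps" where
  "Bor f = Abs_fps (\<lambda>k. fps_nth f k / fact k)"

end

(*
  Monomials in n variables are multisets over {..<n}, and a partition is a
  staircase: a finite down-closed set of such multisets.

  For an idempotent map f on {..<n}, the monomials x_j x_(f j)^e with e < s,
  together with 1, form a staircase with Hilbert function (1, n, ..., n) whose
  socle lies in degree s >= 3; f can be read off from its cubic monomials
  x_j x_(f j)^2.  Conversely, let a staircase have this Hilbert function and
  socle in degree >= 3.  Read its quadratic monomials as a graph on the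
  variables, with a loop at k for x_k^2.  Vertices that are loops or adjacent
  to a loop inject into the edges meeting a loop, and every other vertex has
  at least two neighbours among the loop-free edges.  Since there are only n
  edges, both estimates are tight.  Counting the n cubic monomials then rules
  out the loop-free part, so the quadratic monomials are x_j x_(f j) for an
  idempotent f.  Each higher level is then forced by its facets.

  Hence alpha counts the idempotent maps of an n-set: choose the image K with k
  elements and map the other n - k points into K, giving
  sum_k (n choose k) k^(n-k).  Its exponential generating function is
  sum_k (t e^t)^k / k! = e^(t e^t).
*)
theory Submission
  imports Defs "HOL-Library.FuncSet"
begin

section \<open>Idempotent maps\<close>

definition idempotent_maps :: "nat \<Rightarrow> (nat \<Rightarrow> nat) set" where
  "idempotent_maps n = {f \<in> {..<n} \<rightarrow>\<^sub>E {..<n}. \<forall>j<n. f (f j) = f j}"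

lemma bij_betw_idempotent_maps:
  "bij_betw (\<lambda>f. (f ` {..<n}, restrict f ({..<n} - f ` {..<n}))) (idempotent_maps n)
     (SIGMA K:Pow {..<n}. ({..<n} - K) \<rightarrow>\<^sub>E K)"
    (is "bij_betw ?split _ _")
proof -
  let ?glue = "\<lambda>(K, g) j. if j \<in> K then j else g j"
  have "?split (?glue (K, g)) = (K, g)" if "K \<subseteq> {..<n}" "g \<in> ({..<n} - K) \<rightarrow>\<^sub>E K" for K g
  proof -
    have "?glue (K, g) ` {..<n} = K"
      using that by (force simp: image_iff)
    moreover have "restrict (?glue (K, g)) ({..<n} - K) = g"
      using that by (auto simp: PiE_def extensional_def fun_eq_iff)
    ultimately show ?thesis by simp
  qed
  then show ?thesis
    by (intro bij_betw_byWitness[where f' = ?glue])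
       (auto simp: idempotent_maps_def PiE_def Pi_def extensional_def fun_eq_iff subset_iff)
qed

lemma card_idempotent_maps:
  "card (idempotent_maps n) = (\<Sum>k\<le>n. (n choose k) * k ^ (n - k))"
proof -
  have "card (idempotent_maps n) = card (SIGMA K:Pow {..<n}. ({..<n} - K) \<rightarrow>\<^sub>E K)"
    using bij_betw_idempotent_maps by (rule bij_betw_same_card)
  also have "\<dots> = (\<Sum>K\<in>Pow {..<n}. card K ^ (n - card K))"
    by (subst card_SigmaI)
       (auto intro!: sum.cong finite_PiE intro: finite_subset
             simp: card_PiE card_Diff_subset finite_subset)
  also have "\<dots> = (\<Sum>k\<le>n. card {K \<in> Pow {..<n}. card K = k} * k ^ (n - k))"
    by (rule sum_fun_comp[where f = "\<lambda>k. k ^ (n - k)", simplified])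
       (auto dest: card_mono[of "{..<n}", OF finite_lessThan])
  also have "\<dots> = (\<Sum>k\<le>n. (n choose k) * k ^ (n - k))"
    using n_subsets[of "{..<n}"] by (simp add: Pow_def)
  finally show ?thesis .
qed

section \<open>Partitions as staircases of multisets\<close>

definition level :: "'a multiset set \<Rightarrow> nat \<Rightarrow> 'a multiset set" where
  "level MS d = {M \<in> MS. size M = d}"

definition staircase :: "nat \<Rightarrow> nat multiset set \<Rightarrow> bool" where
  "staircase n MS \<longleftrightarrow> finite MS \<and> (\<forall>M\<in>MS. set_mset M \<subseteq> {..<n}) \<and>
     (\<forall>M\<in>MS. \<forall>N. N \<subseteq># M \<longrightarrow> N \<in> MS)"

lemma in_Nn_count_iff: "in_Nn n (count M) \<longleftrightarrow> set_mset M \<subseteq> {..<n}"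
  by (auto simp: in_Nn_def count_eq_zero_iff) (meson leI lessThan_iff subsetD)

lemma count_Abs_multiset_in_Nn:
  assumes "in_Nn n x" shows "count (Abs_multiset x) = x"
proof -
  have "{i. 0 < x i} \<subseteq> {..<n}"
    using assms by (auto simp: in_Nn_def not_less[symmetric])
  then show ?thesis by (simp add: finite_subset)
qed

lemma inj_count: "inj count"
  by (simp add: inj_on_def count_inject)

lemma count_le_count_iff: "count N \<le> count M \<longleftrightarrow> N \<subseteq># M"
  by (simp add: le_fun_def subseteq_mset_def)

lemma deg_count:
  assumes "set_mset M \<subseteq> {..<n}" shows "deg n (count M) = size M"
proof -
  have "deg n (count M) = sum (count M) (set_mset M)"
    unfolding deg_def using assms
    by (intro sum.mono_neutral_right) (auto simp: count_eq_zero_iff)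
  then show ?thesis by (simp add: size_multiset_overloaded_eq)
qed

lemma count_image_preimage:
  assumes "\<forall>x\<in>L. in_Nn n x" shows "count ` {M. count M \<in> L} = L"
proof
  show "L \<subseteq> count ` {M. count M \<in> L}"
  proof
    fix x assume "x \<in> L"
    then have "count (Abs_multiset x) = x" using assms count_Abs_multiset_in_Nn by blast
    with \<open>x \<in> L\<close> show "x \<in> count ` {M. count M \<in> L}" by (metis image_eqI mem_Collect_eq)
  qed
qed auto

lemma is_partition_count_image_iff: "is_partition n (count ` MS) \<longleftrightarrow> staircase n MS"
proof
  assume part: "is_partition n (count ` MS)"
  have down: "N \<in> MS" if "M \<in> MS" "N \<subseteq># M" for M N
  proof -
    have "in_Nn n (count N)"
      using part that set_mset_mono[OF that(2)]
      by (auto simp: is_partition_def in_Nn_count_iff)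
    then have "count N \<in> count ` MS"
      using part that by (auto simp: is_partition_def count_le_count_iff)
    then show ?thesis by (auto dest: injD[OF inj_count])
  qed
  show "staircase n MS"
    using part down finite_imageD[OF _ inj_on_subset[OF inj_count]]
    by (auto simp: staircase_def is_partition_def in_Nn_count_iff)
next
  assume stair: "staircase n MS"
  have "y \<in> count ` MS" if "M \<in> MS" "in_Nn n y" "y \<le> count M" for M y
  proof -
    have "count (Abs_multiset y) = y"
      using that(2) by (rule count_Abs_multiset_in_Nn)
    with stair that have "Abs_multiset y \<in> MS"
      unfolding staircase_def by (metis count_le_count_iff)
    with \<open>count (Abs_multiset y) = y\<close> show ?thesis by (metis image_eqI)
  qed
  with stair show "is_partition n (count ` MS)"
    by (auto simp: is_partition_def staircase_def in_Nn_count_iff)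
qed

lemma hilb_count_image:
  assumes "\<forall>M\<in>MS. set_mset M \<subseteq> {..<n}"
  shows "hilb n (count ` MS) d = card (level MS d)"
proof -
  have "{x \<in> count ` MS. deg n x = d} = count ` level MS d"
    using assms deg_count by (auto simp: level_def)
  then show ?thesis
    unfolding hilb_def by (simp add: card_image inj_on_subset[OF inj_count])
qed

lemma subset_mset_add_mset_if_psubset:
  assumes "M \<subset># N" obtains i where "add_mset i M \<subseteq># N"
proof -
  obtain C where "N = M + C" "C \<noteq> {#}"
    using assms by (metis add.right_neutral mset_subset_eq_exists_conv subset_mset_def)
  then obtain i where "i \<in># C" by blast
  then have "add_mset i M \<subseteq># N"
    using \<open>N = M + C\<close> by (metis add_mset_add_single mset_subset_eq_mono_add_left_cancel
      single_subset_iff)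
  then show thesis by (rule that)
qed

lemma count_in_Soc_iff:
  assumes "staircase n MS" "M \<in> MS"
  shows "count M \<in> Soc (count ` MS) \<longleftrightarrow> (\<forall>i. add_mset i M \<notin> MS)"
proof
  assume "count M \<in> Soc (count ` MS)"
  then have "count N = count M" if "N \<in> MS" "M \<subseteq># N" for N
    using that by (auto simp: Soc_def count_le_count_iff)
  then show "\<forall>i. add_mset i M \<notin> MS"
    by (metis count_inject multi_psub_of_add_self subset_mset.less_imp_le subset_mset.less_irrefl)
next
  assume maximal: "\<forall>i. add_mset i M \<notin> MS"
  have "N = M" if "N \<in> MS" "M \<subseteq># N" for N
  proof (rule ccontr)
    assume "N \<noteq> M"
    with \<open>M \<subseteq># N\<close> have "M \<subset># N" by (simp add: subset_mset.less_le)
    then obtain i where "add_mset i M \<subseteq># N" by (rule subset_mset_add_mset_if_psubset)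
    moreover have "\<forall>M\<in>MS. \<forall>N. N \<subseteq># M \<longrightarrow> N \<in> MS"
      using assms(1) by (simp add: staircase_def)
    ultimately show False using \<open>N \<in> MS\<close> maximal by blast
  qed
  with assms(2) show "count M \<in> Soc (count ` MS)"
    by (auto simp: Soc_def count_le_count_iff count_inject)
qed

lemma Soc_subset_geq_part_iff:
  assumes "staircase n MS"
  shows "Soc (count ` MS) \<subseteq> geq_part n (count ` MS) k \<longleftrightarrow>
           (\<forall>M\<in>MS. size M < k \<longrightarrow> (\<exists>i. add_mset i M \<in> MS))"
proof -
  have "count M \<in> geq_part n (count ` MS) k \<longleftrightarrow> k \<le> size M" if "M \<in> MS" for M
    using assms that deg_count by (auto simp: geq_part_def staircase_def)
  moreover have "Soc (count ` MS) \<subseteq> count ` MS" by (auto simp: Soc_def)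
  ultimately have "Soc (count ` MS) \<subseteq> geq_part n (count ` MS) k \<longleftrightarrow>
             (\<forall>M\<in>MS. count M \<in> Soc (count ` MS) \<longrightarrow> k \<le> size M)"
    by blast
  with assms show ?thesis by (auto simp: count_in_Soc_iff not_le[symmetric])
qed

lemma hilb_tuple_eq_iff:
  assumes "finite L" "h \<noteq> []" "last h \<noteq> 0"
  shows "hilb_tuple n L = h \<longleftrightarrow> (\<forall>d. hilb n L d = (if d < length h then h ! d else 0))"
proof -
  have hilb_eq_0: "hilb n L d = 0 \<longleftrightarrow> d \<notin> deg n ` L" for d
    using assms(1) by (auto simp: hilb_def)
  show ?thesis
  proof
    assume "hilb_tuple n L = h"
    with assms(2) have "L \<noteq> {}" and h: "h = map (hilb n L) [0..<Suc (Max (deg n ` L))]"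
      by (auto simp: hilb_tuple_def split: if_splits)
    have "d \<notin> deg n ` L" if "Max (deg n ` L) < d" for d
      using that assms(1) Max_ge[of "deg n ` L"] by (auto simp: not_le[symmetric])
    with h hilb_eq_0 have "hilb n L d = 0" if "\<not> d < length h" for d
      using that by simp
    moreover have "hilb n L d = h ! d" if "d < length h" for d
      using that h by (simp del: upt_Suc)
    ultimately show "\<forall>d. hilb n L d = (if d < length h then h ! d else 0)"
      by simp
  next
    assume hilb: "\<forall>d. hilb n L d = (if d < length h then h ! d else 0)"
    let ?l = "length h - 1"
    have "hilb n L ?l \<noteq> 0"
      using hilb assms(2,3) by (simp add: last_conv_nth)
    then have "?l \<in> deg n ` L" by (simp add: hilb_eq_0)
    then have "L \<noteq> {}" and "?l \<le> Max (deg n ` L)" using assms(1) by auto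
    moreover have "Max (deg n ` L) < length h"
    proof -
      have "Max (deg n ` L) \<in> deg n ` L" using \<open>L \<noteq> {}\<close> assms(1) by simp
      then have "hilb n L (Max (deg n ` L)) \<noteq> 0" by (simp add: hilb_eq_0)
      then show ?thesis using hilb by (auto split: if_splits)
    qed
    ultimately have "length h = Suc (Max (deg n ` L))" by linarith
    with \<open>L \<noteq> {}\<close> have "hilb_tuple n L = map (hilb n L) [0..<length h]"
      by (simp add: hilb_tuple_def del: upt_Suc)
    also have "\<dots> = h"
      using hilb by (intro nth_equalityI) simp_all
    finally show "hilb_tuple n L = h" .
  qed
qed

section \<open>The staircase of an idempotent map\<close>

definition flat_staircase :: "nat \<Rightarrow> nat \<Rightarrow> nat multiset set \<Rightarrow> bool" where
  "flat_staircase n s MS \<longleftrightarrow> staircase n MS \<and>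
     (\<forall>d. card (level MS d) = (if d = 0 then 1 else if d \<le> s then n else 0)) \<and>
     (\<forall>M\<in>MS. size M < 3 \<longrightarrow> (\<exists>i. add_mset i M \<in> MS))"

definition idem_monomial :: "(nat \<Rightarrow> nat) \<Rightarrow> nat \<Rightarrow> nat \<Rightarrow> nat multiset" where
  "idem_monomial f j e = add_mset j (replicate_mset e (f j))"

definition idem_staircase :: "nat \<Rightarrow> nat \<Rightarrow> (nat \<Rightarrow> nat) \<Rightarrow> nat multiset set" where
  "idem_staircase n s f = insert {#} ((\<lambda>(j, e). idem_monomial f j e) ` ({..<n} \<times> {..<s}))"

lemma size_idem_monomial [simp]: "size (idem_monomial f j e) = Suc e"
  by (simp add: idem_monomial_def)

lemma set_mset_idem_monomial: "set_mset (idem_monomial f j e) \<subseteq> {j, f j}"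
  by (auto simp: idem_monomial_def split: if_splits)

lemma add_mset_idem_monomial: "add_mset (f j) (idem_monomial f j e) = idem_monomial f j (Suc e)"
  by (simp add: idem_monomial_def add_mset_commute)

lemma idempotent_mapsD:
  assumes "f \<in> idempotent_maps n" "j < n" shows "f j < n" "f (f j) = f j"
  using assms by (auto simp: idempotent_maps_def)

lemma inj_on_idem_monomial:
  assumes "\<And>j. j < n \<Longrightarrow> f (f j) = f j"
  shows "inj_on (\<lambda>j. idem_monomial f j e) {..<n}"
proof (rule inj_onI, rule ccontr)
  fix j k assume jk: "j \<in> {..<n}" "k \<in> {..<n}" "j \<noteq> k"
    and eq: "idem_monomial f j e = idem_monomial f k e"
  have "j \<in># idem_monomial f k e" "k \<in># idem_monomial f j e"
    using eq by (metis idem_monomial_def union_single_eq_member)+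
  then have "j \<in> {k, f k}" "k \<in> {j, f j}"
    using set_mset_idem_monomial by blast+
  with jk have "j = f k" "k = f j" by auto
  with assms[of k] jk show False by (metis lessThan_iff)
qed

lemma count_idem_monomial:
  "count (idem_monomial f j e) x = (if x = j then 1 else 0) + (if x = f j then e else 0)"
  by (simp add: idem_monomial_def)

lemma idem_monomial_eq_imp_eq:
  assumes eq: "idem_monomial f j e = idem_monomial g k e" and "2 \<le> e"
  shows "j = k" "f j = g k"
proof -
  show "f j = g k"
  proof (rule ccontr)
    assume "f j \<noteq> g k"
    then have "count (idem_monomial g k e) (f j) \<le> 1" by (simp add: count_idem_monomial)
    moreover have "count (idem_monomial f j e) (f j) \<ge> 2"
      using \<open>2 \<le> e\<close> by (simp add: count_idem_monomial)
    ultimately show False using eq by simp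
  qed
  moreover have "count (idem_monomial f j e) j = count (idem_monomial g k e) j"
    using eq by simp
  ultimately show "j = k" by (simp add: count_idem_monomial split: if_splits)
qed

lemma level_idem_staircase_0: "level (idem_staircase n s f) 0 = {{#}}"
  by (auto simp: level_def idem_staircase_def)

lemma level_idem_staircase_Suc:
  "level (idem_staircase n s f) (Suc e) =
     (if e < s then (\<lambda>j. idem_monomial f j e) ` {..<n} else {})"
  by (auto simp: level_def idem_staircase_def)

lemma subseteq_idem_monomial_cases [consumes 2]:
  assumes sub: "N \<subseteq># idem_monomial f j e" and idem: "f (f j) = f j"
  obtains (empty) "N = {#}"
    | (same) e' where "e' \<le> e" "N = idem_monomial f j e'"
    | (root) e' where "e' < e" "N = idem_monomial f (f j) e'"
proof (cases "j \<in># N")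
  case True
  then have "add_mset j (N - {#j#}) \<subseteq># add_mset j (replicate_mset e (f j))"
    using sub by (simp add: idem_monomial_def)
  then have "N - {#j#} \<subseteq># replicate_mset e (f j)"
    by (simp only: mset_subset_eq_add_mset_cancel)
  then obtain e' where "e' \<le> e" "N - {#j#} = replicate_mset e' (f j)"
    by (rule msubseteq_replicate_msetE)
  moreover have "N = add_mset j (N - {#j#})" using True by simp
  ultimately show thesis using same by (simp add: idem_monomial_def)
next
  case False
  have le: "count N a \<le> count (add_mset j (replicate_mset e (f j))) a" for a
    using sub unfolding idem_monomial_def subseteq_mset_def by blast
  have "count N a \<le> count (replicate_mset e (f j)) a" for a
    using False le[of a] by (cases "a = j") (auto simp: not_in_iff)
  then have "N \<subseteq># replicate_mset e (f j)" by (simp add: subseteq_mset_def)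
  then obtain e' where e': "e' \<le> e" "N = replicate_mset e' (f j)"
    by (rule msubseteq_replicate_msetE)
  show thesis
  proof (cases e')
    case 0
    with e' empty show thesis by simp
  next
    case (Suc e'')
    with e' idem root[of e''] show thesis by (simp add: idem_monomial_def)
  qed
qed

lemma staircase_idem_staircase:
  assumes f: "f \<in> idempotent_maps n"
  shows "staircase n (idem_staircase n s f)"
  unfolding staircase_def
proof (intro conjI ballI allI impI)
  show "finite (idem_staircase n s f)" by (simp add: idem_staircase_def)
next
  fix M assume "M \<in> idem_staircase n s f"
  with f set_mset_idem_monomial show "set_mset M \<subseteq> {..<n}"
    by (fastforce simp: idem_staircase_def dest: idempotent_mapsD)
next
  fix M N assume M: "M \<in> idem_staircase n s f" and "N \<subseteq># M"
  show "N \<in> idem_staircase n s f"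
  proof (cases "M = {#}")
    case True
    with \<open>N \<subseteq># M\<close> show ?thesis by (simp add: idem_staircase_def)
  next
    case False
    with M obtain j e where je: "j < n" "e < s" "M = idem_monomial f j e"
      by (auto simp: idem_staircase_def)
    from \<open>N \<subseteq># M\<close> je(3) have "N \<subseteq># idem_monomial f j e" by simp
    from this idempotent_mapsD(2)[OF f je(1)] show ?thesis
    proof (cases rule: subseteq_idem_monomial_cases)
      case empty
      then show ?thesis by (simp add: idem_staircase_def)
    next
      case (same e')
      with je show ?thesis unfolding idem_staircase_def by force
    next
      case (root e')
      with je idempotent_mapsD(1)[OF f je(1)] show ?thesis unfolding idem_staircase_def by force
    qed
  qed
qed

lemma flat_staircase_idem_staircase:
  assumes f: "f \<in> idempotent_maps n" and "1 \<le> n" "3 \<le> s"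
  shows "flat_staircase n s (idem_staircase n s f)"
  unfolding flat_staircase_def
proof (intro conjI allI ballI impI)
  show "staircase n (idem_staircase n s f)"
    using f by (rule staircase_idem_staircase)
next
  fix d
  have "card ((\<lambda>j. idem_monomial f j e) ` {..<n}) = n" for e
    using f by (simp add: card_image inj_on_idem_monomial idempotent_maps_def)
  then show "card (level (idem_staircase n s f) d) = (if d = 0 then 1 else if d \<le> s then n else 0)"
    by (cases d) (simp_all add: level_idem_staircase_0 level_idem_staircase_Suc)
next
  fix M assume M: "M \<in> idem_staircase n s f" "size M < 3"
  show "\<exists>i. add_mset i M \<in> idem_staircase n s f"
  proof (cases "M = {#}")
    case True
    have "add_mset 0 {#} = idem_monomial f 0 0" by (simp add: idem_monomial_def)
    with True assms(2,3) show ?thesis by (force simp: idem_staircase_def)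
  next
    case False
    with M obtain j e where je: "j < n" "M = idem_monomial f j e"
      by (auto simp: idem_staircase_def)
    with M(2) assms(3) have "idem_monomial f j (Suc e) \<in> idem_staircase n s f"
      unfolding idem_staircase_def by (intro insertI2 image_eqI[of _ _ "(j, Suc e)"]) auto
    with je(2) show ?thesis by (metis add_mset_idem_monomial)
  qed
qed

lemma inj_on_idem_staircase:
  assumes "3 \<le> s"
  shows "inj_on (idem_staircase n s) (idempotent_maps n)"
proof (rule inj_onI)
  fix f g assume f: "f \<in> idempotent_maps n" and g: "g \<in> idempotent_maps n"
    and eq: "idem_staircase n s f = idem_staircase n s g"
  show "f = g"
  proof (rule PiE_ext)
    show "f \<in> {..<n} \<rightarrow>\<^sub>E {..<n}" "g \<in> {..<n} \<rightarrow>\<^sub>E {..<n}"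
      using f g by (auto simp: idempotent_maps_def)
  next
    fix j assume "j \<in> {..<n}"
    with assms have "idem_monomial f j 2 \<in> level (idem_staircase n s g) 3"
      unfolding eq[symmetric] by (simp add: level_idem_staircase_Suc[of _ _ _ 2, simplified])
    then obtain k where "idem_monomial f j 2 = idem_monomial g k 2"
      using assms by (auto simp: level_idem_staircase_Suc[of _ _ _ 2, simplified])
    then show "f j = g j" using idem_monomial_eq_imp_eq by fastforce
  qed
qed

section \<open>The quadratic monomials of a flat staircase\<close>

lemma doubleton_mset_eq_iff: "{#a, b#} = {#c, d#} \<longleftrightarrow> (a = c \<and> b = d) \<or> (a = d \<and> b = c)"
  by (auto simp: add_eq_conv_diff)

lemma size_eq_2_mset:
  assumes "size M = 2" obtains a b where "M = {#a, b#}"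
proof -
  obtain a N where "M = add_mset a N" "size N = 1"
    using assms size_eq_Suc_imp_eq_union[of M 1] by auto
  with that show thesis using size_1_singleton_mset by blast
qed

lemma size_eq_3_mset:
  assumes "size M = 3" obtains a b c where "M = {#a, b, c#}"
proof -
  obtain a N where "M = add_mset a N" "size N = 2"
    using assms size_eq_Suc_imp_eq_union[of M 2] by auto
  with that show thesis using size_eq_2_mset by metis
qed

locale flat_low_degrees =
  fixes n :: nat and MS :: "nat multiset set"
  assumes staircase: "staircase n MS"
    and singleton_in: "j < n \<Longrightarrow> {#j#} \<in> MS"
    and card_level_2: "card (level MS 2) = n"
    and card_level_3: "card (level MS 3) = n"
    and extensible: "M \<in> MS \<Longrightarrow> size M < 3 \<Longrightarrow> \<exists>i. add_mset i M \<in> MS"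
begin

lemma finite_level: "finite (level MS d)"
  using staircase by (simp add: staircase_def level_def)

lemma down_closed: "M \<in> MS \<Longrightarrow> N \<subseteq># M \<Longrightarrow> N \<in> MS"
  using staircase by (simp add: staircase_def)

lemma in_MS_less: "M \<in> MS \<Longrightarrow> i \<in># M \<Longrightarrow> i < n"
  using staircase by (auto simp: staircase_def)

definition loop :: "nat \<Rightarrow> bool" where
  "loop k \<longleftrightarrow> {#k, k#} \<in> MS"

definition adj :: "nat \<Rightarrow> nat \<Rightarrow> bool" where
  "adj a b \<longleftrightarrow> a \<noteq> b \<and> {#a, b#} \<in> MS"

definition nbrs :: "nat \<Rightarrow> nat set" where
  "nbrs w = {v. adj w v}"

definition rooted :: "nat set" where
  "rooted = {j. j < n \<and> (loop j \<or> (\<exists>a. loop a \<and> adj a j))}"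

(* Only meaningful on rooted vertices: otherwise SOME ranges over an empty predicate. *)
definition root :: "nat \<Rightarrow> nat" where
  "root j = (if loop j then j else SOME a. loop a \<and> adj a j)"

definition loopless_edges :: "nat multiset set" where
  "loopless_edges = {M \<in> level MS 2. \<forall>x\<in>#M. \<not> loop x}"

definition arcs :: "(nat \<times> nat) set" where
  "arcs = {(u, v). adj u v \<and> \<not> loop u \<and> \<not> loop v}"

definition loopy_triples :: "nat multiset set" where
  "loopy_triples = {T \<in> level MS 3. \<exists>x\<in>#T. loop x}"

definition loopless_triples :: "nat multiset set" where
  "loopless_triples = {T \<in> level MS 3. \<forall>x\<in>#T. \<not> loop x}"

abbreviation unrooted :: "nat set" where
  "unrooted \<equiv> {..<n} - rooted"

lemma loop_less: "loop k \<Longrightarrow> k < n"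
  unfolding loop_def using in_MS_less by fastforce

lemma adj_less: "adj a b \<Longrightarrow> a < n \<and> b < n"
  unfolding adj_def using in_MS_less by fastforce

lemma adj_sym: "adj a b \<Longrightarrow> adj b a"
  by (auto simp: adj_def add_mset_commute)

lemma finite_nbrs: "finite (nbrs w)"
  by (rule finite_subset[of _ "{..<n}"]) (auto simp: nbrs_def dest: adj_less)

lemma root_loop [simp]: "loop k \<Longrightarrow> root k = k"
  by (simp add: root_def)

lemma root_rooted:
  assumes "j \<in> rooted" shows "loop (root j) \<and> {#j, root j#} \<in> level MS 2"
proof (cases "loop j")
  case True
  then show ?thesis by (simp add: level_def loop_def)
next
  case False
  with assms have "\<exists>a. loop a \<and> adj a j" by (simp add: rooted_def)
  then have "loop (SOME a. loop a \<and> adj a j) \<and> adj (SOME a. loop a \<and> adj a j) j"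
    by (rule someI_ex)
  with False show ?thesis by (simp add: root_def level_def adj_def add_mset_commute)
qed

lemma inj_on_root_edge: "inj_on (\<lambda>j. {#j, root j#}) rooted"
proof (rule inj_onI, rule ccontr)
  fix j k assume k: "k \<in> rooted" and eq: "{#j, root j#} = {#k, root k#}" and "j \<noteq> k"
  then have "j = root k" "root j = k"
    unfolding doubleton_mset_eq_iff by blast+
  moreover have "loop (root k)" using root_rooted[OF k] by blast
  ultimately show False using \<open>j \<noteq> k\<close> by (metis root_loop)
qed

lemma root_edges_subset: "(\<lambda>j. {#j, root j#}) ` rooted \<subseteq> level MS 2 - loopless_edges"
proof (rule image_subsetI)
  fix j assume "j \<in> rooted"
  then show "{#j, root j#} \<in> level MS 2 - loopless_edges"
    using root_rooted[of j] by (auto simp: loopless_edges_def)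
qed

lemma card_rooted_le: "card rooted \<le> card (level MS 2 - loopless_edges)"
proof -
  have "card rooted = card ((\<lambda>j. {#j, root j#}) ` rooted)"
    by (simp add: card_image inj_on_root_edge)
  also have "\<dots> \<le> card (level MS 2 - loopless_edges)"
    by (rule card_mono[OF _ root_edges_subset]) (simp add: finite_level)
  finally show ?thesis .
qed

lemma two_le_card_nbrs:
  assumes w: "w \<in> unrooted" shows "2 \<le> card (nbrs w)"
proof -
  have "{#w#} \<in> MS" using w singleton_in by simp
  have "\<not> loop w" using w by (simp add: rooted_def)
  obtain i where "add_mset i {#w#} \<in> MS" using extensible[OF \<open>{#w#} \<in> MS\<close>] by auto
  then have i: "{#w, i#} \<in> MS" by (simp add: add_mset_commute)
  with \<open>\<not> loop w\<close> have "adj w i" unfolding adj_def loop_def by auto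
  have "\<not> loop i" using w adj_sym[OF \<open>adj w i\<close>] by (auto simp: rooted_def)
  obtain c where c: "add_mset c {#w, i#} \<in> MS" using extensible[OF i] by auto
  have "{#c, c#} \<subseteq># add_mset c {#w, i#}" if "c = w \<or> c = i"
    using that by (auto simp: add_mset_commute)
  then have "c \<noteq> w" "c \<noteq> i"
    using down_closed[OF c] \<open>\<not> loop w\<close> \<open>\<not> loop i\<close> unfolding loop_def by blast+
  moreover have "{#w, c#} \<in> MS"
    using down_closed[OF c] by (simp add: add_mset_commute)
  ultimately have "{i, c} \<subseteq> nbrs w"
    using \<open>adj w i\<close> by (simp add: nbrs_def adj_def)
  then have "card {i, c} \<le> card (nbrs w)" by (rule card_mono[OF finite_nbrs])
  with \<open>c \<noteq> i\<close> show ?thesis by simp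
qed

lemma finite_arcs: "finite arcs"
  by (rule finite_subset[of _ "{..<n} \<times> {..<n}"]) (auto simp: arcs_def dest: adj_less)

lemma card_arcs: "card arcs = 2 * card loopless_edges"
proof -
  let ?h = "\<lambda>(u, v). ({#u, v#}, u < v)"
  have "inj_on ?h arcs"
    by (rule inj_onI) (auto simp: arcs_def adj_def doubleton_mset_eq_iff)
  moreover have "?h ` arcs = loopless_edges \<times> UNIV"
  proof
    show "?h ` arcs \<subseteq> loopless_edges \<times> UNIV"
      by (auto simp: arcs_def adj_def loopless_edges_def level_def)
    show "loopless_edges \<times> UNIV \<subseteq> ?h ` arcs"
    proof (rule subsetI, clarify)
      fix M b assume M: "M \<in> loopless_edges"
      then have "size M = 2" by (simp add: loopless_edges_def level_def)
      then obtain u v where uv: "M = {#u, v#}" by (rule size_eq_2_mset)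
      with M have "u \<noteq> v" by (auto simp: loopless_edges_def loop_def level_def)
      with M uv have "(u, v) \<in> arcs" "(v, u) \<in> arcs"
        by (auto simp: loopless_edges_def level_def arcs_def adj_def add_mset_commute)
      moreover have "(M, b) = ?h (u, v) \<or> (M, b) = ?h (v, u)"
        using uv \<open>u \<noteq> v\<close> by (auto simp: add_mset_commute)
      ultimately show "(M, b) \<in> ?h ` arcs" by blast
    qed
  qed
  ultimately have "card arcs = card (loopless_edges \<times> (UNIV :: bool set))"
    using card_image by fastforce
  then show ?thesis by (simp add: card_cartesian_product)
qed

lemma Sigma_unrooted_nbrs_subset: "Sigma unrooted nbrs \<subseteq> arcs"
proof (rule subsetI)
  fix p assume "p \<in> Sigma unrooted nbrs"
  then obtain w v where p: "p = (w, v)" "w \<in> unrooted" "adj w v"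
    by (auto simp: nbrs_def)
  then have "\<not> loop w" "\<not> loop v"
    using adj_sym[of w v] by (auto simp: rooted_def)
  with p show "p \<in> arcs" by (simp add: arcs_def)
qed

lemma card_Sigma_unrooted_nbrs: "card (Sigma unrooted nbrs) = (\<Sum>w\<in>unrooted. card (nbrs w))"
  by (simp add: finite_nbrs)

lemma rooted_subset: "rooted \<subseteq> {..<n}"
  by (auto simp: rooted_def)

lemma card_rooted_add_card_unrooted: "card rooted + card unrooted = n"
proof -
  have "card rooted \<le> n" using card_mono[OF _ rooted_subset] by simp
  then show ?thesis using rooted_subset by (simp add: card_Diff_subset finite_subset)
qed

(* n = card (level MS 2) \<ge> card rooted + card loopless_edges \<ge> card rooted + card unrooted = n,
   so all intermediate estimates are equalities. *)
lemma counting_tight: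
  "card rooted = card (level MS 2 - loopless_edges)"
  "card (Sigma unrooted nbrs) = card arcs"
  "(\<Sum>w\<in>unrooted. card (nbrs w)) = 2 * card unrooted"
  "card loopless_edges = card unrooted"
proof -
  have "(\<Sum>w\<in>unrooted. 2) \<le> (\<Sum>w\<in>unrooted. card (nbrs w))"
    by (rule sum_mono) (rule two_le_card_nbrs)
  then have "2 * card unrooted \<le> card (Sigma unrooted nbrs)"
    by (simp add: card_Sigma_unrooted_nbrs)
  moreover have "card (Sigma unrooted nbrs) \<le> card arcs"
    by (rule card_mono[OF finite_arcs Sigma_unrooted_nbrs_subset])
  moreover note card_rooted_add_card_unrooted
  moreover have "card (level MS 2 - loopless_edges) + card loopless_edges = n"
  proof -
    have "loopless_edges \<subseteq> level MS 2" by (auto simp: loopless_edges_def)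
    then show ?thesis
      using card_level_2 finite_level card_mono[of "level MS 2" loopless_edges]
      by (simp add: card_Diff_subset finite_subset)
  qed
  moreover note card_rooted_le card_arcs card_Sigma_unrooted_nbrs
  ultimately show
    "card rooted = card (level MS 2 - loopless_edges)"
    "card (Sigma unrooted nbrs) = card arcs"
    "(\<Sum>w\<in>unrooted. card (nbrs w)) = 2 * card unrooted"
    "card loopless_edges = card unrooted"
    by linarith+
qed

lemma root_edges_eq: "(\<lambda>j. {#j, root j#}) ` rooted = level MS 2 - loopless_edges"
  using counting_tight(1) finite_level root_edges_subset
  by (intro card_subset_eq) (auto simp: card_image inj_on_root_edge)

lemma arc_source_unrooted: "(u, v) \<in> arcs \<Longrightarrow> u \<in> unrooted"
  using card_subset_eq[OF finite_arcs Sigma_unrooted_nbrs_subset counting_tight(2)] by auto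

lemma card_nbrs_unrooted:
  assumes "w \<in> unrooted" shows "card (nbrs w) = 2"
proof -
  have "(\<Sum>w\<in>unrooted. 2) = (\<Sum>w\<in>unrooted. card (nbrs w))"
    using counting_tight(3) by simp
  from sum_mono_inv[OF this two_le_card_nbrs assms] show ?thesis by simp
qed

lemma loop_edge_cases:
  assumes "loop a" "{#a, z#} \<in> MS"
  shows "z = a \<or> (z \<in> rooted \<and> \<not> loop z \<and> root z = a)"
proof -
  have "{#a, z#} \<in> level MS 2 - loopless_edges"
    using assms by (auto simp: level_def loopless_edges_def)
  then obtain j where j: "j \<in> rooted" "{#a, z#} = {#j, root j#}"
    using root_edges_eq by blast
  then have "(j = a \<and> root j = z) \<or> (j = z \<and> root j = a)"
    by (auto simp: doubleton_mset_eq_iff)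
  with assms(1) j(1) show ?thesis by (metis root_loop)
qed

lemma loop_triple_root_form:
  assumes a: "loop a" and T: "{#a, x, y#} \<in> MS"
  shows "{#a, x, y#} \<in> (\<lambda>j. {#j, root j, root j#}) ` rooted"
proof -
  have "{#a, x#} \<subseteq># {#a, x, y#}" "{#a, y#} \<subseteq># {#a, x, y#}" "{#x, y#} \<subseteq># {#a, x, y#}"
    by (simp_all add: add_mset_commute)
  then have ax: "{#a, x#} \<in> MS" and ay: "{#a, y#} \<in> MS" and xy: "{#x, y#} \<in> MS"
    using down_closed[OF T] by blast+
  have "a \<in> rooted" using a loop_less by (simp add: rooted_def)
  consider "x = a" "y = a"
    | "x = a" "y \<in> rooted" "root y = a"
    | "y = a" "x \<in> rooted" "root x = a"
    | "x \<in> rooted" "\<not> loop x" "y \<in> rooted" "\<not> loop y"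
    using loop_edge_cases[OF a ax] loop_edge_cases[OF a ay] by blast
  then show ?thesis
  proof cases
    case 1
    with a \<open>a \<in> rooted\<close> show ?thesis by (auto intro!: image_eqI[of _ _ a])
  next
    case 2
    then show ?thesis by (auto intro!: image_eqI[of _ _ y] simp: add_mset_commute)
  next
    case 3
    then show ?thesis by (auto intro!: image_eqI[of _ _ x] simp: add_mset_commute)
  next
    case 4
    with xy have "x \<noteq> y" by (auto simp: loop_def)
    with 4 xy have "(x, y) \<in> arcs" by (simp add: arcs_def adj_def)
    with 4 show ?thesis using arc_source_unrooted by blast
  qed
qed

lemma card_loopy_triples_le: "card loopy_triples \<le> card rooted"
proof -
  have "loopy_triples \<subseteq> (\<lambda>j. {#j, root j, root j#}) ` rooted"
  proof
    fix T assume "T \<in> loopy_triples"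
    then obtain a where T: "T \<in> MS" "size T = 3" "a \<in># T" "loop a"
      by (auto simp: loopy_triples_def level_def)
    then have "size (T - {#a#}) = 2" by (simp add: size_Diff_singleton)
    then obtain x y where "T - {#a#} = {#x, y#}" by (rule size_eq_2_mset)
    with T(3) have "T = {#a, x, y#}" by (metis insert_DiffM)
    with T show "T \<in> (\<lambda>j. {#j, root j, root j#}) ` rooted"
      using loop_triple_root_form by simp
  qed
  then have "card loopy_triples \<le> card ((\<lambda>j. {#j, root j, root j#}) ` rooted)"
    by (rule card_mono[rotated]) (simp add: finite_subset[OF rooted_subset])
  also have "\<dots> \<le> card rooted" by (rule card_image_le) (simp add: finite_subset[OF rooted_subset])
  finally show ?thesis .
qed

lemma nbrs_of_triangle:
  assumes "adj a b" "adj a c" "b \<noteq> c" "\<not> loop a" "\<not> loop b"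
  shows "a \<in> unrooted" "nbrs a = {b, c}"
proof -
  from assms have "(a, b) \<in> arcs" by (simp add: arcs_def)
  then show "a \<in> unrooted" by (rule arc_source_unrooted)
  have "{b, c} \<subseteq> nbrs a" using assms(1,2) by (simp add: nbrs_def)
  moreover have "card {b, c} = card (nbrs a)"
    using card_nbrs_unrooted[OF \<open>a \<in> unrooted\<close>] assms(3) by simp
  ultimately have "{b, c} = nbrs a" by (rule card_subset_eq[OF finite_nbrs])
  then show "nbrs a = {b, c}" ..
qed

lemma loopless_triple_shape:
  assumes "T \<in> loopless_triples"
  obtains a b c where "T = {#a, b, c#}" "adj a b" "adj b c" "adj a c"
    "\<not> loop a" "\<not> loop b" "\<not> loop c"
proof -
  have T: "T \<in> MS" "size T = 3" "\<forall>x\<in>#T. \<not> loop x"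
    using assms by (auto simp: loopless_triples_def level_def)
  obtain a b c where abc: "T = {#a, b, c#}" using T(2) by (rule size_eq_3_mset)
  have "{#a, b#} \<subseteq># T" "{#b, c#} \<subseteq># T" "{#a, c#} \<subseteq># T"
    using abc by (simp_all add: add_mset_commute)
  then have "{#a, b#} \<in> MS" "{#b, c#} \<in> MS" "{#a, c#} \<in> MS"
    using down_closed[OF T(1)] by blast+
  moreover have "\<not> loop a" "\<not> loop b" "\<not> loop c" using T(3) abc by auto
  ultimately have "adj a b" "adj b c" "adj a c"
    by (auto simp: adj_def loop_def)
  with abc \<open>\<not> loop a\<close> \<open>\<not> loop b\<close> \<open>\<not> loop c\<close> show thesis by (intro that)
qed

lemma set_mset_loopless_triple:
  assumes "T \<in> loopless_triples" "x \<in># T"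
  shows "x \<in> unrooted" "set_mset T = insert x (nbrs x)"
proof -
  obtain a b c where abc: "T = {#a, b, c#}" "adj a b" "adj b c" "adj a c"
    "\<not> loop a" "\<not> loop b" "\<not> loop c"
    using assms(1) by (rule loopless_triple_shape)
  then have distinct: "a \<noteq> b" "b \<noteq> c" "a \<noteq> c" by (auto simp: adj_def)
  have "x = a \<or> x = b \<or> x = c" using assms(2) abc(1) by auto
  then have "x \<in> unrooted \<and> set_mset T = insert x (nbrs x)"
  proof (elim disjE)
    assume "x = a"
    with abc distinct show ?thesis using nbrs_of_triangle[of a b c] by auto
  next
    assume "x = b"
    with abc distinct show ?thesis using nbrs_of_triangle[of b a c] adj_sym by auto
  next
    assume "x = c"
    with abc distinct show ?thesis using nbrs_of_triangle[of c a b] adj_sym by auto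
  qed
  then show "x \<in> unrooted" "set_mset T = insert x (nbrs x)" by blast+
qed

(* Loop-free cubic monomials are triangles of unrooted vertices, and these vertices have degree
   exactly two, so distinct triangles are disjoint. *)
lemma card_loopless_triples_le: "3 * card loopless_triples \<le> card unrooted"
proof -
  have fin: "finite loopless_triples"
    using finite_level[of 3] by (rule finite_subset[rotated]) (auto simp: loopless_triples_def)
  have distinct: "card (set_mset T) = 3 \<and> T = mset_set (set_mset T)"
    if T: "T \<in> loopless_triples" for T
  proof -
    obtain a b c where "T = {#a, b, c#}" "adj a b" "adj b c" "adj a c"
      "\<not> loop a" "\<not> loop b" "\<not> loop c"
      using T by (rule loopless_triple_shape)
    then show ?thesis by (auto simp: adj_def)
  qed
  have disjoint: "set_mset T \<inter> set_mset T' = {}"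
    if "T \<in> loopless_triples" "T' \<in> loopless_triples" "T \<noteq> T'" for T T'
  proof (rule ccontr)
    assume "set_mset T \<inter> set_mset T' \<noteq> {}"
    then obtain x where x: "x \<in># T" "x \<in># T'" by blast
    have "set_mset T = set_mset T'"
      using set_mset_loopless_triple(2)[OF that(1) x(1)] set_mset_loopless_triple(2)[OF that(2) x(2)]
      by simp
    have "T = mset_set (set_mset T)" using distinct[OF that(1)] by blast
    also have "\<dots> = mset_set (set_mset T')" using \<open>set_mset T = set_mset T'\<close> by simp
    also have "\<dots> = T'" using distinct[OF that(2)] by simp
    finally show False using that(3) by blast
  qed
  have "3 * card loopless_triples = card (\<Union>T\<in>loopless_triples. set_mset T)"
    using fin disjoint distinct by (simp add: card_UN_disjoint)
  also have "\<dots> \<le> card unrooted"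
    using set_mset_loopless_triple(1) by (intro card_mono) auto
  finally show ?thesis .
qed

lemma unrooted_empty: "unrooted = {}"
proof -
  have "level MS 3 = loopy_triples \<union> loopless_triples"
    by (auto simp: loopy_triples_def loopless_triples_def)
  then have "n \<le> card loopy_triples + card loopless_triples"
    using card_level_3 card_Un_le[of loopy_triples loopless_triples] by simp
  then have "card unrooted = 0"
    using card_loopy_triples_le card_loopless_triples_le card_rooted_add_card_unrooted
    by linarith
  then show ?thesis by simp
qed

lemma level_2_eq_root_edges: "level MS 2 = (\<lambda>j. {#j, root j#}) ` {..<n}"
proof -
  have "rooted = {..<n}" using unrooted_empty rooted_subset by blast
  moreover have "finite loopless_edges"
    using finite_level[of 2] by (rule finite_subset[rotated]) (auto simp: loopless_edges_def)
  then have "loopless_edges = {}" using counting_tight(4) unrooted_empty by simp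
  ultimately show ?thesis using root_edges_eq by simp
qed

lemma root_idempotent:
  assumes "j < n" shows "root j < n" "root (root j) = root j"
proof -
  have "j \<in> rooted" using assms unrooted_empty by blast
  then have "loop (root j)" using root_rooted by blast
  then show "root j < n" "root (root j) = root j" using loop_less by simp_all
qed

end

section \<open>Flat staircases are the staircases of idempotent maps\<close>

(* Removing the variable c = f j gives another facet x_k x_(f k)^e; if f k \<noteq> c, then c occurs
   once in M, which forces e = 1 and M = x_c x_i x_j, incompatible with idempotency. *)
lemma idem_monomial_of_facets:
  assumes idem: "\<And>j. j < n \<Longrightarrow> f (f j) = f j" and "1 \<le> e" "M \<noteq> {#}"
    and facets: "\<And>i. i \<in># M \<Longrightarrow> \<exists>j<n. M - {#i#} = idem_monomial f j e"
  shows "\<exists>k<n. M = idem_monomial f k (Suc e)"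
proof -
  obtain i where i: "i \<in># M" using \<open>M \<noteq> {#}\<close> by blast
  obtain j where j: "j < n" "M - {#i#} = idem_monomial f j e" using facets[OF i] by blast
  define c where "c = f j"
  have Mi: "M = add_mset i (idem_monomial f j e)" using i j(2) by (metis insert_DiffM)
  have "c \<in># M" using \<open>1 \<le> e\<close> by (simp add: Mi c_def idem_monomial_def)
  then obtain k where k: "k < n" "M - {#c#} = idem_monomial f k e" using facets by blast
  have Mc: "M = add_mset c (idem_monomial f k e)" using \<open>c \<in># M\<close> k(2) by (metis insert_DiffM)
  show ?thesis
  proof (cases "f k = c")
    case True
    with Mc k(1) show ?thesis by (metis add_mset_idem_monomial)
  next
    case False
    have "c \<notin># idem_monomial f k e"
    proof
      assume "c \<in># idem_monomial f k e"
      with False have "c = k" using set_mset_idem_monomial by blast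
      with False idem[OF j(1)] show False by (simp add: c_def)
    qed
    then have "count M c = 1" by (simp add: Mc not_in_iff)
    moreover have "count M c = (if c = i then 1 else 0) + (if c = j then 1 else 0) + e"
      by (simp add: Mi count_idem_monomial c_def)
    ultimately have "e = 1" "c \<noteq> i" "c \<noteq> j" using \<open>1 \<le> e\<close> by (auto split: if_splits)
    then have "add_mset c (idem_monomial f k 1) = add_mset c {#i, j#}"
      using Mi Mc by (simp add: idem_monomial_def c_def add_mset_commute)
    then have "{#k, f k#} = {#i, j#}" by (simp add: idem_monomial_def)
    then have "(k = i \<and> f k = j) \<or> (k = j \<and> f k = i)"
      by (simp add: doubleton_mset_eq_iff)
    with idem[OF k(1)] \<open>c \<noteq> i\<close> \<open>c \<noteq> j\<close> show ?thesis by (auto simp: c_def)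
  qed
qed

lemma eq_if_levels_eq: "(\<And>d. level A d = level B d) \<Longrightarrow> A = B"
  unfolding level_def by blast

lemma level_1_flat_staircase:
  assumes flat: "flat_staircase n s MS" and "1 \<le> s"
  shows "level MS 1 = (\<lambda>j. {#j#}) ` {..<n}"
proof (rule card_subset_eq)
  show "level MS 1 \<subseteq> (\<lambda>j. {#j#}) ` {..<n}"
  proof
    fix M assume "M \<in> level MS 1"
    then have "M \<in> MS" "size M = 1" by (simp_all add: level_def)
    moreover from this(2) obtain a where "M = {#a#}" using size_1_singleton_mset by blast
    ultimately have "a < n" using flat by (auto simp: flat_staircase_def staircase_def)
    with \<open>M = {#a#}\<close> show "M \<in> (\<lambda>j. {#j#}) ` {..<n}" by simp
  qed
  show "card (level MS 1) = card ((\<lambda>j. {#j#}) ` {..<n})"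
    using flat \<open>1 \<le> s\<close> by (simp add: flat_staircase_def card_image inj_on_def)
qed simp

lemma flat_low_degrees_if_flat_staircase:
  assumes flat: "flat_staircase n s MS" and "3 \<le> s"
  shows "flat_low_degrees n MS"
proof
  show "staircase n MS" "M \<in> MS \<Longrightarrow> size M < 3 \<Longrightarrow> \<exists>i. add_mset i M \<in> MS"
    "card (level MS 2) = n" "card (level MS 3) = n" for M
    using flat \<open>3 \<le> s\<close> by (auto simp: flat_staircase_def)
  show "j < n \<Longrightarrow> {#j#} \<in> MS" for j
    using level_1_flat_staircase[OF flat] \<open>3 \<le> s\<close> by (auto simp: level_def)
qed

lemma levels_flat_staircase:
  assumes flat: "flat_staircase n s MS" and f: "f \<in> idempotent_maps n"
    and level_2: "level MS 2 = (\<lambda>j. idem_monomial f j 1) ` {..<n}"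
  shows "e < s \<Longrightarrow> level MS (Suc e) = (\<lambda>j. idem_monomial f j e) ` {..<n}"
proof (induction e)
  case 0
  then show ?case
    using level_1_flat_staircase[OF flat] by (simp add: idem_monomial_def)
next
  case (Suc e)
  show ?case
  proof (cases "e = 0")
    case True
    then show ?thesis using level_2 by (simp add: numeral_2_eq_2)
  next
    case False
    have "level MS (Suc (Suc e)) \<subseteq> (\<lambda>j. idem_monomial f j (Suc e)) ` {..<n}"
    proof
      fix M assume M: "M \<in> level MS (Suc (Suc e))"
      have "\<exists>j<n. M - {#i#} = idem_monomial f j e" if "i \<in># M" for i
      proof -
        have "M - {#i#} \<in> level MS (Suc e)"
          using M that flat by (auto simp: level_def flat_staircase_def staircase_def size_Diff_singleton)
        with Suc show ?thesis by auto
      qed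
      moreover have "M \<noteq> {#}" "1 \<le> e" using M False by (auto simp: level_def)
      ultimately have "\<exists>k<n. M = idem_monomial f k (Suc e)"
        using idem_monomial_of_facets[of n f e M] idempotent_mapsD(2)[OF f] by blast
      then show "M \<in> (\<lambda>j. idem_monomial f j (Suc e)) ` {..<n}" by auto
    qed
    moreover have "card ((\<lambda>j. idem_monomial f j (Suc e)) ` {..<n}) \<le> card (level MS (Suc (Suc e)))"
      using flat Suc.prems card_image_le[of "{..<n}"] by (simp add: flat_staircase_def)
    ultimately show ?thesis by (intro card_seteq) simp_all
  qed
qed

lemma flat_staircase_eq_idem_staircase:
  assumes flat: "flat_staircase n s MS" and "3 \<le> s"
  obtains f where "f \<in> idempotent_maps n" "MS = idem_staircase n s f"
proof -
  interpret flat_low_degrees n MS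
    using flat_low_degrees_if_flat_staircase[OF assms] .
  define f where "f = restrict root {..<n}"
  have f: "f \<in> idempotent_maps n"
    using root_idempotent by (auto simp: f_def idempotent_maps_def)
  have "level MS 2 = (\<lambda>j. idem_monomial f j 1) ` {..<n}"
    unfolding level_2_eq_root_edges by (auto simp: f_def idem_monomial_def)
  note levels = levels_flat_staircase[OF flat f this]
  have "level MS d = level (idem_staircase n s f) d" for d
  proof (cases d)
    case 0
    have "level MS 0 \<subseteq> {{#}}" by (auto simp: level_def)
    moreover have "card (level MS 0) = 1" using flat by (simp add: flat_staircase_def)
    ultimately have "level MS 0 = {{#}}" by (intro card_seteq) simp_all
    with 0 show ?thesis by (simp add: level_idem_staircase_0)
  next
    case (Suc e)
    have "finite (level MS d)" using flat by (simp add: flat_staircase_def staircase_def level_def)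
    moreover have "card (level MS d) = 0" if "\<not> e < s"
      using flat Suc that by (simp add: flat_staircase_def)
    ultimately have "level MS d = {}" if "\<not> e < s" using that by simp
    with Suc levels show ?thesis by (simp add: level_idem_staircase_Suc)
  qed
  then have "MS = idem_staircase n s f" by (rule eq_if_levels_eq)
  with f show thesis by (rule that)
qed

lemma card_flat_staircases:
  assumes "1 \<le> n" "3 \<le> s"
  shows "card {MS. flat_staircase n s MS} = (\<Sum>k\<le>n. (n choose k) * k ^ (n - k))"
proof -
  have "{MS. flat_staircase n s MS} = idem_staircase n s ` idempotent_maps n"
  proof
    show "idem_staircase n s ` idempotent_maps n \<subseteq> {MS. flat_staircase n s MS}"
      using flat_staircase_idem_staircase[OF _ assms] by blast
    show "{MS. flat_staircase n s MS} \<subseteq> idem_staircase n s ` idempotent_maps n"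
    proof
      fix MS assume "MS \<in> {MS. flat_staircase n s MS}"
      then obtain f where "f \<in> idempotent_maps n" "MS = idem_staircase n s f"
        using flat_staircase_eq_idem_staircase[OF _ assms(2)] by blast
      then show "MS \<in> idem_staircase n s ` idempotent_maps n" by blast
    qed
  qed
  then show ?thesis
    using card_image[OF inj_on_idem_staircase[OF assms(2)]] card_idempotent_maps by simp
qed

section \<open>Counting partitions\<close>

lemma partition_conditions_iff_flat_staircase:
  assumes "1 \<le> n"
  shows "is_partition n (count ` MS) \<and> hilb_tuple n (count ` MS) = hns n s \<and>
           Soc (count ` MS) \<subseteq> geq_part n (count ` MS) 3
         \<longleftrightarrow> flat_staircase n s MS"
proof (cases "staircase n MS")
  case True
  then have "finite (count ` MS)" "\<forall>M\<in>MS. set_mset M \<subseteq> {..<n}"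
    by (simp_all add: staircase_def)
  moreover have "hns n s \<noteq> []" "last (hns n s) \<noteq> 0"
    using assms by (simp_all add: hns_def last_replicate)
  moreover have "(if d < length (hns n s) then hns n s ! d else 0)
                   = (if d = 0 then 1 else if d \<le> s then n else 0)" for d
    by (simp add: hns_def nth_Cons')
  ultimately have "hilb_tuple n (count ` MS) = hns n s \<longleftrightarrow>
      (\<forall>d. card (level MS d) = (if d = 0 then 1 else if d \<le> s then n else 0))"
    by (simp add: hilb_tuple_eq_iff hilb_count_image)
  with True show ?thesis
    by (simp add: is_partition_count_image_iff Soc_subset_geq_part_iff flat_staircase_def)
qed (simp add: is_partition_count_image_iff flat_staircase_def)

lemma alpha_hns_eq_card_flat_staircases:
  assumes "1 \<le> n" "1 \<le> s"
  shows "alpha (hns n s) = card {MS. flat_staircase n s MS}"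
proof -
  let ?P = "\<lambda>L. is_partition n L \<and> hilb_tuple n L = hns n s \<and> Soc L \<subseteq> geq_part n L 3"
  note conditions_iff = partition_conditions_iff_flat_staircase[OF assms(1), of _ s]
  have sets: "{L. ?P L} = (`) count ` {MS. flat_staircase n s MS}"
  proof
    show "(`) count ` {MS. flat_staircase n s MS} \<subseteq> {L. ?P L}"
      using conditions_iff by (intro image_subsetI) simp
    show "{L. ?P L} \<subseteq> (`) count ` {MS. flat_staircase n s MS}"
    proof
      fix L assume "L \<in> {L. ?P L}"
      then have L: "?P L" by simp
      then have eq: "count ` {M. count M \<in> L} = L"
        by (intro count_image_preimage[of _ n]) (simp add: is_partition_def)
      with L have "flat_staircase n s {M. count M \<in> L}"
        using conditions_iff[of "{M. count M \<in> L}"] by simp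
      with eq show "L \<in> (`) count ` {MS. flat_staircase n s MS}"
        by (intro image_eqI[of _ _ "{M. count M \<in> L}"]) simp_all
    qed
  qed
  have "inj ((`) count)"
    by (simp add: inj_def inj_image_eq_iff[OF inj_count])
  then have card_eq: "card ((`) count ` {MS. flat_staircase n s MS}) = card {MS. flat_staircase n s MS}"
    by (rule card_image[OF inj_on_subset]) simp
  have "hns n s ! 1 = n" using assms(2) by (simp add: hns_def)
  then have "alpha (hns n s) = card {L. ?P L}" by (simp add: alpha_def)
  also have "\<dots> = card {MS. flat_staircase n s MS}" unfolding sets by (rule card_eq)
  finally show ?thesis .
qed

lemma Bor_card_idempotent_maps:
  "Bor (Abs_fps (\<lambda>n. real (\<Sum>k\<le>n. (n choose k) * k ^ (n - k))))
     = fps_compose (fps_exp 1) (fps_X * fps_exp 1)"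
proof (rule fps_ext)
  fix n
  have power: "(fps_X * fps_exp (1::real)) ^ i = fps_X ^ i * fps_exp (of_nat i)" for i
    by (simp add: power_mult_distrib fps_exp_power_mult)
  have "fps_nth (fps_compose (fps_exp 1) (fps_X * fps_exp (1::real))) n
      = (\<Sum>i=0..n. 1 / fact i * (real i ^ (n - i) / fact (n - i)))"
    unfolding fps_compose_nth power fps_X_power_mult_nth by (intro sum.cong) auto
  also have "\<dots> = (\<Sum>i\<le>n. real (n choose i) * real i ^ (n - i)) / fact n"
    unfolding sum_divide_distrib atLeast0AtMost
    by (intro sum.cong refl) (simp add: binomial_fact field_simps)
  finally show "fps_nth (Bor (Abs_fps (\<lambda>n. real (\<Sum>k\<le>n. (n choose k) * k ^ (n - k))))) n
      = fps_nth (fps_compose (fps_exp 1) (fps_X * fps_exp 1)) n"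
    by (simp add: Bor_def)
qed

theorem theorem5p4:
  fixes s :: nat
  assumes "s \<ge> 3"
  shows "(\<forall>n\<ge>1. alpha (hns n s) = (\<Sum>k\<le>n. (n choose k) * k ^ (n - k)))
       \<and> Bor (Abs_fps (\<lambda>n. if n = 0 then 1 else real (alpha (hns n s))))
           = fps_compose (fps_exp 1) (fps_X * fps_exp 1)"
proof -
  have alpha: "alpha (hns n s) = (\<Sum>k\<le>n. (n choose k) * k ^ (n - k))" if "n \<ge> 1" for n
    using that assms by (simp add: alpha_hns_eq_card_flat_staircases card_flat_staircases)
  then have "(\<lambda>n. if n = 0 then 1 else real (alpha (hns n s)))
      = (\<lambda>n. real (\<Sum>k\<le>n. (n choose k) * k ^ (n - k)))"
    by (auto simp: fun_eq_iff)
  then have "Bor (Abs_fps (\<lambda>n. if n = 0 then 1 else real (alpha (hns n s))))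
      = fps_compose (fps_exp 1) (fps_X * fps_exp 1)"
    by (simp only: Bor_card_idempotent_maps)
  with alpha show ?thesis by simp
qed

end
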